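(* In the setting of the context, let $M$ be the central equidistant of $P$. Then the mixed area $$A(M,M)=\frac12\sum_{i=1}^{2n}[M_i,M_{i+1}-M_i]$$ is non-positive.
   Context: $[x,y]$ denotes the determinant of the matrix with columns $x,y\in\mathbb{R}^2$. Fix $n\ge2$; indices are read modulo $2n$. $U$ is a convex $2n$-gon with distinct vertices $U_1,\dots,U_{2n}$ in counterclockwise order with $U_{i+n}=-U_i$. Let $c>0$ and let $P$ be a convex polygon with nonempty interior and vertex list $P_1,\dots,P_{2n}$ (consecutive entries may coincide) with $P_{i+1}-P_i$ a nonnegative multiple of $U_{i+1}-U_i$ and $P_i-P_{i+n}=2cU_i$ for all $i$ (a polygon of constant width in the norm with unit ball $U$). The central equidistant $M$ of $P$ has vertices $M_i=\frac12(P_i+P_{i+n})$. *)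

theory Defs
  imports "HOL-Analysis.Analysis"
begin

definition det2 :: "real^2 \<Rightarrow> real^2 \<Rightarrow> real" where
  "det2 x y = x$1 * y$2 - x$2 * y$1"

text \<open>V (indexed periodically with period m) lists the distinct vertices of a convex
  m-gon in counterclockwise order: every other vertex lies strictly to the left of
  each directed edge V i \<rightarrow> V (i+1).\<close>
definition convex_ccw_polygon :: "nat \<Rightarrow> (nat \<Rightarrow> real^2) \<Rightarrow> bool" where
  "convex_ccw_polygon m V \<longleftrightarrow> 3 \<le> m \<and> (\<forall>i. V (i + m) = V i) \<and> inj_on V {..<m} \<and>
     (\<forall>i<m. \<forall>j<m. j \<noteq> i \<and> j \<noteq> Suc i mod m \<longrightarrow> det2 (V (Suc i) - V i) (V j - V i) > 0)"

definition central_equidistant :: "nat \<Rightarrow> (nat \<Rightarrow> real^2) \<Rightarrow> nat \<Rightarrow> real^2" where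
  "central_equidistant n P i = (1/2) *\<^sub>R (P i + P (i + n))"

definition mixed_area_self :: "nat \<Rightarrow> (nat \<Rightarrow> real^2) \<Rightarrow> real" where
  "mixed_area_self m M = (1/2) * (\<Sum>i<m. det2 (M i) (M (Suc i) - M i))"

end

theory Submission
  imports Defs
begin

text \<open>The edges \<open>d\<^sub>i = U\<^sub>i\<^sub>+\<^sub>1 - U\<^sub>i\<close> of the centrally symmetric polygon U turn strictly to the left
  along half of its boundary: \<open>[d\<^sub>j, d\<^sub>k] > 0\<close> for \<open>j < k < n\<close>. The equidistant is \<open>M\<^sub>i = P\<^sub>i - c U\<^sub>i\<close>,
  so its edges are \<open>s\<^sub>i d\<^sub>i\<close> with \<open>s\<^sub>i = t\<^sub>i - c\<close> when \<open>t\<^sub>i d\<^sub>i\<close> is the i-th edge of P, and M has period n.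
  Hence \<open>A(M,M)\<close> is the quadratic form \<open>\<Sum>\<^sub>j\<^sub><\<^sub>i s\<^sub>j s\<^sub>i [d\<^sub>j, d\<^sub>i]\<close> at a coefficient vector with
  \<open>\<Sum> s\<^sub>i d\<^sub>i = 0\<close>, and there it is non-positive: in a projective coordinate \<open>z\<^sub>i\<close> that increases along
  the turning edges, \<open>[d\<^sub>j, d\<^sub>i]\<close> is proportional to \<open>\<phi>\<^sub>i \<phi>\<^sub>j (z\<^sub>i - z\<^sub>j)\<close> with \<open>\<phi>\<^sub>i > 0\<close>, and Abel
  summation turns the form into \<open>-\<Sum> (z\<^sub>k\<^sub>+\<^sub>1 - z\<^sub>k) S\<^sub>k\<^sub>+\<^sub>1\<^sup>2\<close>, where \<open>S\<^sub>k\<close> are the partial sums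
  of the weights \<open>\<phi>\<^sub>i s\<^sub>i\<close>.\<close>

definition polygon_edge :: "(nat \<Rightarrow> real^2) \<Rightarrow> nat \<Rightarrow> real^2" where
  "polygon_edge V i = V (Suc i) - V i"

lemma det2_self [simp]: "det2 x x = 0"
  and det2_zero_right [simp]: "det2 x 0 = 0"
  unfolding det2_def by simp_all

lemma det2_scaleR_left [simp]: "det2 (t *\<^sub>R x) y = t * det2 x y"
  and det2_scaleR_right [simp]: "det2 x (t *\<^sub>R y) = t * det2 x y"
  unfolding det2_def by (simp_all add: algebra_simps)

lemma det2_add_left: "det2 (x + y) z = det2 x z + det2 y z"
  and det2_commute: "det2 x y = - det2 y x"
  unfolding det2_def by (simp_all add: algebra_simps)

lemma det2_sum_left: "det2 (sum f A) y = (\<Sum>a\<in>A. det2 (f a) y)"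
  and det2_sum_right: "det2 x (sum f A) = (\<Sum>a\<in>A. det2 x (f a))"
  unfolding det2_def by (simp_all add: sum_distrib_left sum_distrib_right sum_subtractf)

lemma det2_plucker: "det2 b c * det2 p a = det2 a c * det2 p b - det2 a b * det2 p c"
  unfolding det2_def by (simp add: algebra_simps)

section \<open>Abel summation\<close>

lemma sum_pairs_weighted_diff_eq:
  fixes \<sigma> z :: "nat \<Rightarrow> real"
  shows "(\<Sum>i<m. \<Sum>j<i. \<sigma> j * \<sigma> i * (z i - z j)) =
    (\<Sum>i<m. z i * ((\<Sum>j<Suc i. \<sigma> j)\<^sup>2 - (\<Sum>j<i. \<sigma> j)\<^sup>2)) - (\<Sum>j<m. \<sigma> j) * (\<Sum>j<m. \<sigma> j * z j)"
proof (induction m)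
  case (Suc m)
  have "(\<Sum>j<m. \<sigma> j * \<sigma> m * (z m - z j)) = \<sigma> m * z m * (\<Sum>j<m. \<sigma> j) - \<sigma> m * (\<Sum>j<m. \<sigma> j * z j)"
    by (simp add: sum_distrib_left sum_subtractf algebra_simps)
  with Suc show ?case by (simp add: algebra_simps power2_eq_square)
qed simp

lemma sum_mono_weight_square_increments_le:
  fixes T z :: "nat \<Rightarrow> real"
  assumes "T 0 = 0" and "\<And>k. k < m \<Longrightarrow> z k \<le> z (Suc k)"
  shows "(\<Sum>i<Suc m. z i * ((T (Suc i))\<^sup>2 - (T i)\<^sup>2)) \<le> z m * (T (Suc m))\<^sup>2"
  using assms(2)
proof (induction m)
  case (Suc m)
  have "(\<Sum>i<Suc m. z i * ((T (Suc i))\<^sup>2 - (T i)\<^sup>2)) \<le> z m * (T (Suc m))\<^sup>2"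
    using Suc by simp
  also have "\<dots> \<le> z (Suc m) * (T (Suc m))\<^sup>2"
    using Suc.prems[of m] by (simp add: mult_right_mono)
  finally show ?case by (simp add: right_diff_distrib)
qed (simp add: assms(1))

lemma sum_pairs_weighted_diff_nonpos:
  fixes \<sigma> z :: "nat \<Rightarrow> real"
  assumes sum0: "(\<Sum>j<m. \<sigma> j) = 0" and mono: "\<And>k. Suc k < m \<Longrightarrow> z k \<le> z (Suc k)"
  shows "(\<Sum>i<m. \<Sum>j<i. \<sigma> j * \<sigma> i * (z i - z j)) \<le> 0"
proof (cases m)
  case (Suc l)
  define S where "S k = (\<Sum>j<k. \<sigma> j)" for k
  have "(\<Sum>i<m. \<Sum>j<i. \<sigma> j * \<sigma> i * (z i - z j)) = (\<Sum>i<Suc l. z i * ((S (Suc i))\<^sup>2 - (S i)\<^sup>2))"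
    using sum0 Suc by (simp add: sum_pairs_weighted_diff_eq S_def)
  also have "\<dots> \<le> z l * (S (Suc l))\<^sup>2"
    by (rule sum_mono_weight_square_increments_le) (use mono Suc in \<open>auto simp: S_def\<close>)
  also have "\<dots> = 0"
    using sum0 Suc by (simp add: S_def)
  finally show ?thesis .
qed simp

section \<open>Strictly turning vectors\<close>

lemma det2_first_minus_last_pos:
  fixes d :: "nat \<Rightarrow> real^2"
  assumes turn: "\<And>j k. j < k \<Longrightarrow> k < n \<Longrightarrow> det2 (d j) (d k) > 0"
    and "2 \<le> n" "i < n"
  shows "det2 (d 0 - d (n - 1)) (d i) > 0"
proof -
  have "det2 (d 0 - d (n - 1)) (d i) = det2 (d 0) (d i) + det2 (d i) (d (n - 1))"
    unfolding det2_def by (simp add: algebra_simps)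
  moreover consider "i = 0" | "i = n - 1" | "0 < i" "i < n - 1"
    using assms(2,3) by linarith
  then have "det2 (d 0) (d i) + det2 (d i) (d (n - 1)) > 0"
    using turn[of 0 "n - 1"] turn[of 0 i] turn[of i "n - 1"] assms(2,3)
    by cases (auto simp: det2_commute[of "d (n - 1)"])
  ultimately show ?thesis by simp
qed

text \<open>With \<open>\<phi>\<^sub>i = [d\<^sub>0 - d\<^sub>n\<^sub>-\<^sub>1, d\<^sub>i] > 0\<close> the Pluecker relation gives
  \<open>\<phi>\<^sub>0 [d\<^sub>j, d\<^sub>i] = \<phi>\<^sub>i \<phi>\<^sub>j (z\<^sub>i - z\<^sub>j)\<close> for \<open>z\<^sub>i = [d\<^sub>0, d\<^sub>i] / \<phi>\<^sub>i\<close>, and z increases along the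
  turning vectors.\<close>

lemma turning_quadratic_form_nonpos:
  fixes d :: "nat \<Rightarrow> real^2" and s :: "nat \<Rightarrow> real"
  assumes turn: "\<And>j k. j < k \<Longrightarrow> k < n \<Longrightarrow> det2 (d j) (d k) > 0"
    and sum0: "(\<Sum>i<n. s i *\<^sub>R d i) = 0"
  shows "(\<Sum>i<n. \<Sum>j<i. s j * s i * det2 (d j) (d i)) \<le> 0"
proof (cases "2 \<le> n")
  case n2: True
  define \<phi> where "\<phi> i = det2 (d 0 - d (n - 1)) (d i)" for i
  define z where "z i = det2 (d 0) (d i) / \<phi> i" for i
  define \<sigma> where "\<sigma> i = s i * \<phi> i" for i
  have \<phi>_pos: "\<phi> i > 0" if "i < n" for i
    unfolding \<phi>_def using det2_first_minus_last_pos[OF turn n2 that] .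
  have projective: "\<phi> 0 * det2 (d j) (d i) = \<phi> i * \<phi> j * (z i - z j)" if "i < n" "j < n" for i j
  proof -
    have "\<phi> i * \<phi> j * (z i - z j) = det2 (d 0) (d i) * \<phi> j - det2 (d 0) (d j) * \<phi> i"
      using \<phi>_pos[OF that(1)] \<phi>_pos[OF that(2)] by (simp add: z_def field_simps)
    then show ?thesis
      using det2_plucker[of "d j" "d i" "d 0 - d (n - 1)" "d 0"] unfolding \<phi>_def
      by (simp add: mult.commute)
  qed
  have "\<phi> 0 * (\<Sum>i<n. \<Sum>j<i. s j * s i * det2 (d j) (d i))
      = (\<Sum>i<n. \<Sum>j<i. \<sigma> j * \<sigma> i * (z i - z j))"
    unfolding sum_distrib_left
  proof (intro sum.cong refl)
    fix i j assume "i \<in> {..<n}" "j \<in> {..<i}"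
    then have "\<phi> 0 * (s j * s i * det2 (d j) (d i)) = s j * s i * (\<phi> i * \<phi> j * (z i - z j))"
      using projective[of i j] by simp
    then show "\<phi> 0 * (s j * s i * det2 (d j) (d i)) = \<sigma> j * \<sigma> i * (z i - z j)"
      unfolding \<sigma>_def by (simp add: algebra_simps)
  qed
  also have "\<dots> \<le> 0"
  proof (rule sum_pairs_weighted_diff_nonpos)
    have "(\<Sum>j<n. \<sigma> j) = det2 (d 0 - d (n - 1)) (\<Sum>i<n. s i *\<^sub>R d i)"
      by (simp add: \<sigma>_def \<phi>_def det2_sum_right mult.commute)
    then show "(\<Sum>j<n. \<sigma> j) = 0"
      using sum0 by (simp add: det2_def)
    show "z k \<le> z (Suc k)" if "Suc k < n" for k
    proof -
      have "0 < \<phi> 0 * det2 (d k) (d (Suc k))"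
        using turn[of k "Suc k"] \<phi>_pos[of 0] that by simp
      also have "\<dots> = \<phi> (Suc k) * \<phi> k * (z (Suc k) - z k)"
        using projective that by simp
      finally have "0 < \<phi> (Suc k) * \<phi> k * (z (Suc k) - z k)" .
      moreover have "0 < \<phi> (Suc k) * \<phi> k"
        using \<phi>_pos that by simp
      ultimately show ?thesis by (simp add: zero_less_mult_iff)
    qed
  qed
  finally show ?thesis
    using \<phi>_pos[of 0] n2 by (simp add: mult_le_0_iff)
next
  case False
  then have "n = 0 \<or> n = 1" by auto
  then show ?thesis by auto
qed

section \<open>Edges of a centrally symmetric convex polygon\<close>

lemma convex_ccw_polygon_det2_pos:
  assumes "convex_ccw_polygon N U" "i < N" "k < N" "k \<noteq> i" "k \<noteq> Suc i mod N"
  shows "det2 (polygon_edge U i) (U k - U i) > 0"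
  using assms unfolding convex_ccw_polygon_def polygon_edge_def by blast

text \<open>\<open>U\<^sub>m - U\<^sub>k\<close> lies in the cone spanned by the two edges at \<open>U\<^sub>k\<close>.\<close>

lemma convex_ccw_polygon_vertex_cone:
  assumes U: "convex_ccw_polygon N U"
    and right_next: "det2 v (U (Suc k) - U k) \<le> 0"
    and right_prev: "det2 v (U (k - 1) - U k) \<le> 0"
    and k: "1 \<le> k" "Suc k < N" and m: "m < N"
  shows "det2 v (U m - U k) \<le> 0"
proof (cases "m = k - 1 \<or> m = k \<or> m = Suc k")
  case False
  define a where "a = U (Suc k) - U k"
  define b where "b = U (k - 1) - U k"
  define y where "y = U m - U k"
  have ay: "det2 a y > 0"
    using convex_ccw_polygon_det2_pos[OF U, of k m] k m False
    unfolding a_def y_def polygon_edge_def by auto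
  have ab: "det2 a b > 0"
    using convex_ccw_polygon_det2_pos[OF U, of k "k - 1"] k
    unfolding a_def b_def polygon_edge_def by auto
  have "det2 (polygon_edge U (k - 1)) (U m - U (k - 1)) > 0"
    by (rule convex_ccw_polygon_det2_pos[OF U]) (use k m False in auto)
  then have yb: "det2 y b > 0"
    using k unfolding y_def b_def polygon_edge_def det2_def by (simp add: algebra_simps)
  have "det2 v y * det2 a b = det2 y b * det2 v a + det2 a y * det2 v b"
    unfolding det2_def by (simp add: algebra_simps)
  also have "\<dots> \<le> 0"
    using yb ay right_next right_prev unfolding a_def b_def
    by (simp add: add_nonpos_nonpos mult_nonneg_nonpos)
  finally show ?thesis
    using ab unfolding y_def by (simp add: mult_le_0_iff)
qed (use right_next right_prev in auto)

text \<open>Otherwise both edges at \<open>U\<^sub>k\<close> lie weakly to the right of \<open>d\<^sub>j\<close>, hence by the cone lemma so does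
  \<open>U\<^sub>j\<^sub>+\<^sub>n - U\<^sub>k = -U\<^sub>j - U\<^sub>k\<close>; but the opposite edge \<open>-d\<^sub>j\<close>, starting at \<open>-U\<^sub>j\<close>, has \<open>U\<^sub>k\<close> strictly on
  its left.\<close>

lemma symmetric_polygon_turn_step:
  assumes U: "convex_ccw_polygon (2*n) U" and U_sym: "\<forall>i. U (i + n) = - U i"
    and j: "j < n" and k: "j < k" "k < j + n"
    and prev: "det2 (polygon_edge U j) (polygon_edge U (k - 1)) \<ge> 0"
  shows "det2 (polygon_edge U j) (polygon_edge U k) > 0"
proof (rule ccontr)
  define d where "d = polygon_edge U j"
  assume "\<not> ?thesis"
  then have "det2 d (U (Suc k) - U k) \<le> 0"
    unfolding d_def polygon_edge_def by simp
  moreover have "det2 d (U (k - 1) - U k) \<le> 0"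
    using prev k unfolding d_def polygon_edge_def det2_def by (simp add: algebra_simps)
  ultimately have "det2 d (U (j + n) - U k) \<le> 0"
    by (rule convex_ccw_polygon_vertex_cone[OF U]) (use k j in auto)
  moreover have "Suc (j + n) mod (2 * n) \<noteq> k"
    using j k by (cases "Suc (j + n) < 2 * n") (auto simp: mod_if)
  then have "det2 (polygon_edge U (j + n)) (U k - U (j + n)) > 0"
    by (intro convex_ccw_polygon_det2_pos[OF U]) (use j k in auto)
  moreover have "polygon_edge U (j + n) = - d" "U (j + n) = - U j"
    using U_sym[rule_format, of j] U_sym[rule_format, of "Suc j"]
    unfolding d_def polygon_edge_def by simp_all
  ultimately show False
    unfolding det2_def by (simp add: algebra_simps)
qed

lemma symmetric_polygon_edges_turn:
  assumes U: "convex_ccw_polygon (2*n) U" and U_sym: "\<forall>i. U (i + n) = - U i"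
    and jk: "j < k" "k < n"
  shows "det2 (polygon_edge U j) (polygon_edge U k) > 0"
  using jk
proof (induction k)
  case (Suc k)
  have "det2 (polygon_edge U j) (polygon_edge U k) \<ge> 0"
    using Suc by (cases "j = k") auto
  then show ?case
    by (intro symmetric_polygon_turn_step[OF U U_sym]) (use Suc.prems in auto)
qed simp

section \<open>The central equidistant\<close>

lemma central_equidistant_periodic:
  assumes "\<And>i. P (i + 2*n) = P i"
  shows "central_equidistant n P (i + n) = central_equidistant n P i"
proof -
  have "P (i + n + n) = P i"
    using assms[of i] by (simp add: mult_2 add.assoc)
  then show ?thesis
    unfolding central_equidistant_def by (simp add: add.commute)
qed

lemma central_equidistant_eq:
  assumes "\<And>i. P i - P (i + n) = (2*c) *\<^sub>R U i"
  shows "central_equidistant n P i = P i - c *\<^sub>R U i"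
proof -
  have "P (i + n) = P i - (2*c) *\<^sub>R U i"
    using assms[of i] by (simp add: algebra_simps)
  then show ?thesis
    unfolding central_equidistant_def by (simp add: vec_eq_iff field_simps)
qed

lemma central_equidistant_edge:
  assumes width: "\<And>i. P i - P (i + n) = (2*c) *\<^sub>R U i"
    and edge: "P (Suc i) - P i = t *\<^sub>R polygon_edge U i"
  shows "polygon_edge (central_equidistant n P) i = (t - c) *\<^sub>R polygon_edge U i"
proof -
  have "polygon_edge (central_equidistant n P) i = (P (Suc i) - P i) - c *\<^sub>R polygon_edge U i"
    unfolding polygon_edge_def central_equidistant_eq[of P n c U, OF width] by (simp add: algebra_simps)
  then show ?thesis
    using edge by (simp add: algebra_simps)
qed

lemma sum_lessThan_double_period:
  fixes f :: "nat \<Rightarrow> 'a::comm_monoid_add"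
  assumes "\<And>i. f (i + n) = f i"
  shows "(\<Sum>i<2*n. f i) = (\<Sum>i<n. f i) + (\<Sum>i<n. f i)"
proof -
  have "(\<Sum>i<2*n. f i) = (\<Sum>i<n. f i) + (\<Sum>i\<in>{n..<n+n}. f i)"
    by (simp add: mult_2 lessThan_atLeast0 sum.atLeastLessThan_concat)
  also have "(\<Sum>i\<in>{n..<n+n}. f i) = (\<Sum>i<n. f i)"
    using sum.shift_bounds_nat_ivl[of f 0 n n] assms by (simp add: lessThan_atLeast0 add.commute)
  finally show ?thesis .
qed

lemma sum_det2_vertex_edge:
  "(\<Sum>i<n. det2 (M i) (polygon_edge M i)) =
     det2 (M 0) (M n - M 0) + (\<Sum>i<n. \<Sum>j<i. det2 (polygon_edge M j) (polygon_edge M i))"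
proof -
  have vertex: "M i = M 0 + (\<Sum>j<i. polygon_edge M j)" for i
    using sum_lessThan_telescope[of M i] unfolding polygon_edge_def by simp
  have "(\<Sum>i<n. det2 (M i) (polygon_edge M i)) =
      (\<Sum>i<n. det2 (M 0) (polygon_edge M i) + (\<Sum>j<i. det2 (polygon_edge M j) (polygon_edge M i)))"
    by (subst vertex) (simp add: det2_add_left det2_sum_left)
  then show ?thesis
    using sum_lessThan_telescope[of M n]
    by (simp add: sum.distrib det2_sum_right[symmetric] polygon_edge_def)
qed

lemma periodic_polygon_sum_edges:
  assumes "\<And>i. M (i + n) = M i" and "\<And>i. polygon_edge M i = s i *\<^sub>R d i"
  shows "(\<Sum>i<n. s i *\<^sub>R d i) = 0"
proof -
  have "(\<Sum>i<n. s i *\<^sub>R d i) = (\<Sum>i<n. polygon_edge M i)"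
    by (simp add: assms(2))
  also have "\<dots> = M n - M 0"
    unfolding polygon_edge_def by (rule sum_lessThan_telescope)
  finally show ?thesis
    using assms(1)[of 0] by simp
qed

lemma mixed_area_self_periodic_polygon:
  assumes periodic: "\<And>i. M (i + n) = M i" and edge: "\<And>i. polygon_edge M i = s i *\<^sub>R d i"
  shows "mixed_area_self (2*n) M = (\<Sum>i<n. \<Sum>j<i. s j * s i * det2 (d j) (d i))"
proof -
  have "mixed_area_self (2*n) M = (\<Sum>i<n. det2 (M i) (polygon_edge M i))"
    using sum_lessThan_double_period[of "\<lambda>i. det2 (M i) (polygon_edge M i)" n] periodic
    unfolding mixed_area_self_def polygon_edge_def by (simp add: add_Suc[symmetric] del: add_Suc)
  also have "\<dots> = (\<Sum>i<n. \<Sum>j<i. det2 (polygon_edge M j) (polygon_edge M i))"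
    using sum_det2_vertex_edge[of M n] periodic[of 0] by simp
  finally show ?thesis
    by (simp add: edge algebra_simps)
qed

theorem lemma3p3:
  fixes n :: nat and c :: real and U P :: "nat \<Rightarrow> real^2"
  assumes n2: "2 \<le> n"
    and U_poly: "convex_ccw_polygon (2*n) U"
    and U_sym: "\<forall>i. U (i + n) = - U i"
    and c_pos: "c > 0"
    and P_per: "\<forall>i. P (i + 2*n) = P i"
    and P_edges: "\<forall>i. \<exists>t\<ge>0. P (Suc i) - P i = t *\<^sub>R (U (Suc i) - U i)"
    and P_width: "\<forall>i. P i - P (i + n) = (2*c) *\<^sub>R U i"
    and P_int: "interior (convex hull (P ` {..<2*n})) \<noteq> {}"
  shows "mixed_area_self (2*n) (central_equidistant n P) \<le> 0"
proof -
  obtain t where t: "\<And>i. P (Suc i) - P i = t i *\<^sub>R polygon_edge U i"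
    using P_edges unfolding polygon_edge_def by metis
  define M where "M = central_equidistant n P"
  have edge: "polygon_edge M i = (t i - c) *\<^sub>R polygon_edge U i" for i
    unfolding M_def using central_equidistant_edge P_width t by blast
  have periodic: "M (i + n) = M i" for i
    unfolding M_def using central_equidistant_periodic P_per by blast
  have "mixed_area_self (2*n) M =
      (\<Sum>i<n. \<Sum>j<i. (t j - c) * (t i - c) * det2 (polygon_edge U j) (polygon_edge U i))"
    by (rule mixed_area_self_periodic_polygon[OF periodic edge])
  also have "\<dots> \<le> 0"
    by (rule turning_quadratic_form_nonpos[OF symmetric_polygon_edges_turn[OF U_poly U_sym]
          periodic_polygon_sum_edges[OF periodic edge]])
  finally show ?thesis unfolding M_def .
qed

end
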